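(* Let $z\in\mathcal T_\rightarrow$ and let $z'$ belong to the closure of $\mathcal T_\leftarrow$ in $X^{(c)}$. Then $[z'\cdot\xi]\ne0$ for all $\xi$ in the support of $\gamma(z)$.
   Context: $[z\cdot z']=z_0z'_0-z_1z'_1-z_2z'_2$ on $\mathbb C^3$, $z^2=[z\cdot z]$; $X^{(c)}=\{z\in\mathbb C^3:z^2=-1\}$, $z=x+iy$; $G=SO_0(1,2)$; $V^+=\{y:y^2>0,y_0>0\}$; fix $e\in V^+$; $\mathcal T_\rightarrow=\{z\in X^{(c)}:y^2<0,{\rm sgn}\det(e,x,y)=-1\}$, $\mathcal T_\leftarrow$ the same with $+1$. Cycles: for $v>0$ let $z_v=(0,i\sinh v,\cosh v)\in\mathcal T_\rightarrow$; every $z\in\mathcal T_\rightarrow$ can be written $z=gz_v$ with $g\in G$, $v>0$. With $\xi(\Phi)=(1,\sin\Phi,\cos\Phi)$, $\gamma(z_v)$ is the path $\phi\mapsto\xi(\phi+iv)$, $\phi$ from $-\pi/2$ to $\pi/2$, and $\gamma(z)=g\gamma(z_v)$ (for any such representation $z=gz_v$). *)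

theory Defs
  imports "HOL-Analysis.Analysis"
begin

text \<open>Coordinates: z0, z1, z2 of the paper are z$1, z$2, z$3 of a vector in complex^3.\<close>

definition mink :: "complex^3 \<Rightarrow> complex^3 \<Rightarrow> complex" where
  "mink z w = z$1 * w$1 - z$2 * w$2 - z$3 * w$3"

definition minkR :: "real^3 \<Rightarrow> real^3 \<Rightarrow> real" where
  "minkR x y = x$1 * y$1 - x$2 * y$2 - x$3 * y$3"

definition Xc :: "(complex^3) set" where
  "Xc = {z. mink z z = -1}"

definition re3 :: "complex^3 \<Rightarrow> real^3" where
  "re3 z = (\<chi> i. Re (z$i))"

definition im3 :: "complex^3 \<Rightarrow> real^3" where
  "im3 z = (\<chi> i. Im (z$i))"

definition Vplus :: "(real^3) set" where
  "Vplus = {y. minkR y y > 0 \<and> y$1 > 0}"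

definition det3 :: "real^3 \<Rightarrow> real^3 \<Rightarrow> real^3 \<Rightarrow> real" where
  "det3 a b c = det (transpose (vector [a, b, c] :: real^3^3))"

definition Tright :: "real^3 \<Rightarrow> (complex^3) set" where
  "Tright e = {z \<in> Xc. minkR (im3 z) (im3 z) < 0 \<and> sgn (det3 e (re3 z) (im3 z)) = -1}"

definition Tleft :: "real^3 \<Rightarrow> (complex^3) set" where
  "Tleft e = {z \<in> Xc. minkR (im3 z) (im3 z) < 0 \<and> sgn (det3 e (re3 z) (im3 z)) = 1}"

definition SO012 :: "(real^3^3) set" where
  "SO012 = {g. det g = 1 \<and> (\<forall>x y. minkR (g *v x) (g *v y) = minkR x y) \<and> g$1$1 > 0}"

definition act :: "real^3^3 \<Rightarrow> complex^3 \<Rightarrow> complex^3" where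
  "act g z = (\<chi> i. \<Sum>j\<in>UNIV. complex_of_real (g$i$j) * z$j)"

definition zv :: "real \<Rightarrow> complex^3" where
  "zv v = vector [0, \<i> * complex_of_real (sinh v), complex_of_real (cosh v)]"

definition xi :: "complex \<Rightarrow> complex^3" where
  "xi \<Phi> = vector [1, sin \<Phi>, cos \<Phi>]"

end

theory Submission
  imports Defs
begin

(* Everything is equivariant under G, and the rotations rot phi in G, which fix e_0 = (1,0,0),
   shift the real part of the cycle parameter. Replacing g by g rot phi and z' by its preimage w
   under g therefore reduces the claim to [w . xi(iv)] <> 0.
   The closure of T_<- lies in the closed set where [w . w] = -1, (Im w)^2 <= 0 and
   det(a, Re w, Im w) >= 0, for any a in V^+: on T_<- the Lorentzian cross product of Re w and
   Im w is timelike, so the sign of the determinant does not depend on a.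
   Finally, if [w . xi(iv)] = 0 then u = cosh v w_1 - i sinh v w_2 satisfies u^2 = -[w . w] = 1,
   and for u = +-1 the two weak inequalities with a = e_0 contradict each other. *)

lemma det3_expand:
  "det3 a b c = a$1 * (b$2 * c$3 - b$3 * c$2) - a$2 * (b$1 * c$3 - b$3 * c$1) + a$3 * (b$1 * c$2 - b$2 * c$1)"
  unfolding det3_def det_3 by (simp add: transpose_def algebra_simps)

lemma det3_axis_1: "det3 (axis 1 1) x y = x$2 * y$3 - x$3 * y$2"
  by (simp add: det3_expand axis_def)

lemma det3_matrix_vector_mult: "det3 (g *v a) (g *v b) (g *v c) = det g * det3 a b c"
  unfolding det3_expand det_3 by (simp add: matrix_vector_mult_def sum_3 algebra_simps)

lemma minkR_commute: "minkR x y = minkR y x"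
  by (simp add: minkR_def mult.commute)

lemma mink_Re_Im:
  "mink p q = Complex (minkR (re3 p) (re3 q) - minkR (im3 p) (im3 q)) (minkR (re3 p) (im3 q) + minkR (im3 p) (re3 q))"
  by (simp add: complex_eq_iff mink_def minkR_def re3_def im3_def algebra_simps)

lemma Xc_iff_re3_im3:
  "z \<in> Xc \<longleftrightarrow> minkR (re3 z) (re3 z) - minkR (im3 z) (im3 z) = -1 \<and> minkR (re3 z) (im3 z) = 0"
  by (auto simp: Xc_def mink_Re_Im complex_eq_iff minkR_commute[of "im3 z" "re3 z"])

lemma re3_act: "re3 (act g z) = g *v re3 z" and im3_act: "im3 (act g z) = g *v im3 z"
  by (simp_all add: vec_eq_iff re3_def im3_def act_def matrix_vector_mult_def sum_3)

lemma vec_eq_iff_re3_im3: "z = w \<longleftrightarrow> re3 z = re3 w \<and> im3 z = im3 w"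
  by (auto simp: vec_eq_iff re3_def im3_def complex_eq_iff)

lemma act_matrix_mult: "act (g ** h) z = act g (act h z)"
  by (simp add: vec_eq_iff_re3_im3 re3_act im3_act matrix_vector_mul_assoc)

lemma mink_act:
  assumes "\<And>x y. minkR (g *v x) (g *v y) = minkR x y"
  shows "mink (act g p) (act g q) = mink p q"
  by (simp add: mink_Re_Im re3_act im3_act assms)

lemma surj_act:
  assumes "det g \<noteq> 0"
  shows "surj (act g)"
proof -
  obtain h where "g ** h = mat 1"
    using assms invertible_det_nz invertible_def by blast
  then have "act g (act h z) = z" for z
    by (simp add: vec_eq_iff_re3_im3 re3_act im3_act matrix_vector_mul_assoc)
  then show ?thesis by (metis surjI)
qed

lemma SO012_axis_in_Vplus:
  assumes "g \<in> SO012"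
  shows "g *v axis 1 1 \<in> Vplus"
proof -
  have "minkR (g *v axis 1 1) (g *v axis 1 1) = 1"
    using assms by (simp add: SO012_def minkR_def axis_def)
  moreover have "(g *v axis 1 1) $ 1 = g$1$1"
    by (simp add: matrix_vector_mult_def sum_3 axis_def)
  ultimately show ?thesis
    using assms by (simp add: Vplus_def SO012_def)
qed

definition rot :: "real \<Rightarrow> real^3^3" where
  "rot \<phi> = vector [vector [1, 0, 0], vector [0, cos \<phi>, sin \<phi>], vector [0, - sin \<phi>, cos \<phi>]]"

lemma xi_add_real: "xi (complex_of_real \<phi> + \<Phi>) = act (rot \<phi>) (xi \<Phi>)"
proof -
  have "sin (complex_of_real \<phi> + \<Phi>) = complex_of_real (cos \<phi>) * sin \<Phi> + complex_of_real (sin \<phi>) * cos \<Phi>"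
    by (simp add: sin_add flip: sin_of_real cos_of_real)
  moreover have "cos (complex_of_real \<phi> + \<Phi>) = - complex_of_real (sin \<phi>) * sin \<Phi> + complex_of_real (cos \<phi>) * cos \<Phi>"
    by (simp add: cos_add flip: sin_of_real cos_of_real)
  ultimately show ?thesis
    by (simp add: vec_eq_iff forall_3 xi_def act_def rot_def sum_3)
qed

lemma SO012_mult_rot:
  assumes "g \<in> SO012"
  shows "g ** rot \<phi> \<in> SO012"
proof -
  have "det (rot \<phi>) = 1"
    by (simp add: rot_def det_3 power2_eq_square[symmetric])
  moreover have "minkR (rot \<phi> *v x) (rot \<phi> *v y) = minkR x y" for x y
    by (simp add: rot_def minkR_def matrix_vector_mult_def sum_3)
      (use sin_cos_squared_add[of \<phi>] in algebra)
  moreover have "(g ** rot \<phi>) $ 1 $ 1 = g $ 1 $ 1"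
    by (simp add: rot_def matrix_matrix_mult_def sum_3)
  ultimately show ?thesis
    using assms by (simp add: SO012_def det_mul matrix_vector_mul_assoc[symmetric])
qed

definition lorentz_cross :: "real^3 \<Rightarrow> real^3 \<Rightarrow> real^3" where
  "lorentz_cross x y = vector [x$2 * y$3 - x$3 * y$2, x$1 * y$3 - x$3 * y$1, x$2 * y$1 - x$1 * y$2]"

lemma det3_eq_minkR_lorentz_cross: "det3 u x y = minkR u (lorentz_cross x y)"
  by (simp add: det3_expand minkR_def lorentz_cross_def algebra_simps)

lemma minkR_lorentz_cross_self:
  "minkR (lorentz_cross x y) (lorentz_cross x y) = minkR x x * minkR y y - (minkR x y)\<^sup>2"
  unfolding minkR_def lorentz_cross_def by (simp add: power2_eq_square) algebra

lemma Vplus_reverse_Cauchy_Schwarz: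
  assumes "a \<in> Vplus" and "minkR n n > 0"
  shows "\<bar>a$2 * n$2 + a$3 * n$3\<bar> < a$1 * \<bar>n$1\<bar>"
proof -
  have a: "(a$2)\<^sup>2 + (a$3)\<^sup>2 < (a$1)\<^sup>2" "a$1 > 0"
    using assms(1) by (auto simp: Vplus_def minkR_def power2_eq_square)
  have n: "(n$2)\<^sup>2 + (n$3)\<^sup>2 < (n$1)\<^sup>2"
    using assms(2) by (simp add: minkR_def power2_eq_square)
  have "(a$2 * n$2 + a$3 * n$3)\<^sup>2 \<le> ((a$2)\<^sup>2 + (a$3)\<^sup>2) * ((n$2)\<^sup>2 + (n$3)\<^sup>2)"
  proof -
    have "((a$2)\<^sup>2 + (a$3)\<^sup>2) * ((n$2)\<^sup>2 + (n$3)\<^sup>2) - (a$2 * n$2 + a$3 * n$3)\<^sup>2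
        = (a$2 * n$3 - a$3 * n$2)\<^sup>2"
      by (simp add: power2_eq_square algebra_simps)
    then show ?thesis
      by (metis diff_ge_0_iff_ge zero_le_power2)
  qed
  also have "\<dots> < (a$1)\<^sup>2 * (n$1)\<^sup>2"
    using a(1) n by (intro mult_strict_mono') simp_all
  also have "\<dots> = (a$1 * \<bar>n$1\<bar>)\<^sup>2"
    by (simp add: power_mult_distrib)
  finally have "\<bar>a$2 * n$2 + a$3 * n$3\<bar>\<^sup>2 < (a$1 * \<bar>n$1\<bar>)\<^sup>2"
    by simp
  moreover have "0 \<le> a$1 * \<bar>n$1\<bar>"
    using a(2) by simp
  ultimately show ?thesis
    by (rule power2_less_imp_less)
qed

lemma Vplus_minkR_pos_iff:
  assumes "a \<in> Vplus" and "minkR n n > 0"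
  shows "minkR a n > 0 \<longleftrightarrow> n$1 > 0"
proof -
  have "minkR a n = a$1 * n$1 - (a$2 * n$2 + a$3 * n$3)"
    by (simp add: minkR_def)
  moreover have "a$1 > 0"
    using assms(1) by (simp add: Vplus_def)
  moreover have "\<bar>a$2 * n$2 + a$3 * n$3\<bar> < a$1 * \<bar>n$1\<bar>"
    by (rule Vplus_reverse_Cauchy_Schwarz[OF assms])
  ultimately show ?thesis
    by (cases "n$1 > 0") (auto simp: abs_less_iff)
qed

definition Tleft_weak :: "real^3 \<Rightarrow> (complex^3) set" where
  "Tleft_weak a = {z \<in> Xc. minkR (im3 z) (im3 z) \<le> 0 \<and> det3 a (re3 z) (im3 z) \<ge> 0}"

lemma Tleft_subset_Tleft_weak:
  assumes "e \<in> Vplus" and "a \<in> Vplus"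
  shows "Tleft e \<subseteq> Tleft_weak a"
proof
  fix z assume z: "z \<in> Tleft e"
  define n where "n = lorentz_cross (re3 z) (im3 z)"
  have y: "minkR (im3 z) (im3 z) < 0" and "det3 e (re3 z) (im3 z) > 0"
    using z by (auto simp: Tleft_def sgn_1_pos)
  then have e: "minkR e n > 0"
    by (simp add: n_def det3_eq_minkR_lorentz_cross)
  have "minkR n n = (minkR (im3 z) (im3 z) - 1) * minkR (im3 z) (im3 z)"
    using z by (simp add: n_def minkR_lorentz_cross_self Tleft_def Xc_iff_re3_im3)
  also have "\<dots> > 0"
    using y by (simp add: mult_neg_neg)
  finally have "minkR n n > 0" .
  with e have "minkR a n > 0"
    using Vplus_minkR_pos_iff assms by blast
  then show "z \<in> Tleft_weak a"
    using z y by (auto simp: Tleft_def Tleft_weak_def n_def det3_eq_minkR_lorentz_cross)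
qed

lemma closed_Tleft_weak: "closed (Tleft_weak a)"
proof -
  have "Tleft_weak a = {z. z$1 * z$1 - z$2 * z$2 - z$3 * z$3 = -1} \<inter>
     {z. Im (z$1) * Im (z$1) - Im (z$2) * Im (z$2) - Im (z$3) * Im (z$3) \<le> 0} \<inter>
     {z. 0 \<le> a$1 * (Re (z$2) * Im (z$3) - Re (z$3) * Im (z$2)) - a$2 * (Re (z$1) * Im (z$3) - Re (z$3) * Im (z$1))
               + a$3 * (Re (z$1) * Im (z$2) - Re (z$2) * Im (z$1))}"
    unfolding Tleft_weak_def Xc_def mink_def minkR_def det3_expand re3_def im3_def by auto
  also have "closed \<dots>"
    by (intro closed_Int closed_Collect_eq closed_Collect_le continuous_intros)
  finally show ?thesis .
qed

lemma closure_Tleft_subset_Tleft_weak: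
  assumes "e \<in> Vplus" and "a \<in> Vplus"
  shows "closure (Tleft e) \<subseteq> Tleft_weak a"
  using closure_minimal[OF Tleft_subset_Tleft_weak[OF assms] closed_Tleft_weak] .

lemma act_in_Tleft_weak_iff:
  assumes "g \<in> SO012"
  shows "act g z \<in> Tleft_weak (g *v a) \<longleftrightarrow> z \<in> Tleft_weak a"
proof -
  have "det g = 1" and pres: "\<And>x y. minkR (g *v x) (g *v y) = minkR x y"
    using assms by (auto simp: SO012_def)
  then show ?thesis
    by (simp add: Tleft_weak_def Xc_def mink_act re3_act im3_act det3_matrix_vector_mult)
qed

lemma xi_imaginary:
  "xi (\<i> * complex_of_real v) = vector [1, \<i> * complex_of_real (sinh v), complex_of_real (cosh v)]"
proof -
  have "sin (\<i> * complex_of_real v) = \<i> * complex_of_real (sinh v)"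
    by (simp add: sin_i_times sinh_field_def exp_of_real exp_minus)
  moreover have "cos (\<i> * complex_of_real v) = complex_of_real (cosh v)"
    by (simp add: cos_i_times cosh_field_def exp_of_real exp_minus)
  ultimately show ?thesis by (simp add: xi_def)
qed

lemma Xc_orthogonal_xi_imaginaryE:
  assumes "z \<in> Xc" and "mink z (xi (\<i> * complex_of_real v)) = 0"
  obtains \<epsilon> :: real where "\<epsilon>\<^sup>2 = 1"
    and "cosh v * re3 z$2 + sinh v * im3 z$3 = \<epsilon>"
    and "cosh v * im3 z$2 = sinh v * re3 z$3"
    and "im3 z$1 = cosh v * im3 z$3 + sinh v * re3 z$2"
proof -
  define C S where "C = complex_of_real (cosh v)" and "S = complex_of_real (sinh v)"
  define u where "u = C * z$2 - \<i> * S * z$3"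
  have z1: "z$1 = \<i> * S * z$2 + C * z$3"
    using assms(2) by (simp add: mink_def xi_imaginary C_def S_def algebra_simps)
  have "C\<^sup>2 - S\<^sup>2 = 1"
    unfolding C_def S_def by (metis cosh_square_eq add_diff_cancel_left' of_real_1 of_real_diff of_real_power)
  moreover have "u\<^sup>2 + mink z z = (C\<^sup>2 - S\<^sup>2 - 1) * ((z$2)\<^sup>2 + (z$3)\<^sup>2)"
    unfolding u_def mink_def z1 by (simp add: power2_eq_square algebra_simps)
  ultimately have "u\<^sup>2 = 1"
    using assms(1) by (simp add: Xc_def)
  then obtain \<epsilon> :: real where "\<epsilon>\<^sup>2 = 1" and u: "u = complex_of_real \<epsilon>"
    by (metis power2_eq_1_iff of_real_1 of_real_minus power2_minus power_one)
  moreover have "cosh v * re3 z$2 + sinh v * im3 z$3 = \<epsilon>"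
    using arg_cong[OF u, of Re] by (simp add: u_def C_def S_def re3_def im3_def)
  moreover have "cosh v * im3 z$2 = sinh v * re3 z$3"
    using arg_cong[OF u, of Im] by (simp add: u_def C_def S_def re3_def im3_def)
  moreover have "im3 z$1 = cosh v * im3 z$3 + sinh v * re3 z$2"
    using arg_cong[OF z1, of Im] by (simp add: C_def S_def re3_def im3_def)
  ultimately show thesis
    using that by blast
qed

lemma Tleft_weak_mink_xi_imaginary_neq_0:
  assumes "w \<in> Tleft_weak (axis 1 1)" and "v > 0"
  shows "mink w (xi (\<i> * complex_of_real v)) \<noteq> 0"
proof
  assume "mink w (xi (\<i> * complex_of_real v)) = 0"
  then obtain \<epsilon> where \<epsilon>: "\<epsilon>\<^sup>2 = 1"
    and eqs: "cosh v * re3 w$2 + sinh v * im3 w$3 = \<epsilon>"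
      "cosh v * im3 w$2 = sinh v * re3 w$3" "im3 w$1 = cosh v * im3 w$3 + sinh v * re3 w$2"
    using Xc_orthogonal_xi_imaginaryE assms(1) by (auto simp: Tleft_weak_def)
  define ch sh where "ch = cosh v" and "sh = sinh v"
  define x y where "x = re3 w" and "y = im3 w"
  note eqs = eqs[folded ch_def sh_def x_def y_def]
  have hyp: "ch\<^sup>2 - sh\<^sup>2 = 1" "sh > 0" "ch > 0"
    using assms(2) by (simp_all add: ch_def sh_def cosh_square_eq)
  have time: "minkR y y \<le> 0" and orient: "x$2 * y$3 - x$3 * y$2 \<ge> 0"
    using assms(1) by (simp_all add: Tleft_weak_def x_def y_def det3_axis_1)
  define P where "P = sh * ((x$3)\<^sup>2 + (y$3)\<^sup>2)"
  have "P \<ge> 0"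
    using hyp by (simp add: P_def)
  have "ch * (x$2 * y$3 - x$3 * y$2) = \<epsilon> * y$3 - P"
    unfolding P_def eqs(1)[symmetric] by (simp add: algebra_simps power2_eq_square eqs(2))
  moreover have "ch * (x$2 * y$3 - x$3 * y$2) \<ge> 0"
    using orient hyp by simp
  ultimately have "\<epsilon> * y$3 \<ge> P"
    by simp
  have "ch * y$1 - (y$3 + \<epsilon> * sh) = y$3 * (ch\<^sup>2 - sh\<^sup>2 - 1) + sh * (ch * x$2 + sh * y$3 - \<epsilon>)"
    unfolding eqs(3) by (simp add: power2_eq_square algebra_simps)
  then have "ch * y$1 = y$3 + \<epsilon> * sh"
    using eqs(1) hyp(1) by simp
  then have "ch\<^sup>2 * minkR y y = sh * (sh + 2 * \<epsilon> * y$3 - P)"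
    unfolding minkR_def P_def using eqs(2) hyp(1) \<epsilon> by algebra
  moreover have "ch\<^sup>2 * minkR y y \<le> 0"
    using time by (simp add: mult_nonneg_nonpos)
  ultimately have "sh + 2 * \<epsilon> * y$3 \<le> P"
    using hyp(2) by (simp add: mult_le_0_iff)
  show False
    using \<open>P \<ge> 0\<close> \<open>\<epsilon> * y$3 \<ge> P\<close> \<open>sh + 2 * \<epsilon> * y$3 \<le> P\<close> hyp(2) by linarith
qed

theorem proposition18:
  fixes e :: "real^3" and z z' :: "complex^3"
  assumes "e \<in> Vplus"
    and "z \<in> Tright e"
    and "z' \<in> closure (Tleft e)"
  shows "\<forall>g v \<phi>. g \<in> SO012 \<and> v > 0 \<and> z = act g (zv v) \<and> - (pi/2) \<le> \<phi> \<and> \<phi> \<le> pi/2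
           \<longrightarrow> mink z' (act g (xi (complex_of_real \<phi> + \<i> * complex_of_real v))) \<noteq> 0"
proof (intro allI impI)
  fix g v \<phi>
  assume "g \<in> SO012 \<and> v > 0 \<and> z = act g (zv v) \<and> - (pi/2) \<le> \<phi> \<and> \<phi> \<le> pi/2"
  then have g: "g \<in> SO012" and v: "v > 0"
    by auto
  define g' where "g' = g ** rot \<phi>"
  have g': "g' \<in> SO012"
    unfolding g'_def using g by (rule SO012_mult_rot)
  have cycle: "act g (xi (complex_of_real \<phi> + \<i> * complex_of_real v)) = act g' (xi (\<i> * complex_of_real v))"
    by (simp add: g'_def act_matrix_mult xi_add_real)
  have "det g' \<noteq> 0"
    using g' by (simp add: SO012_def)
  then obtain w where w: "z' = act g' w"
    using surj_act surjD by metis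
  have "act g' w \<in> Tleft_weak (g' *v axis 1 1)"
    using closure_Tleft_subset_Tleft_weak[OF assms(1) SO012_axis_in_Vplus[OF g']] assms(3) w by blast
  then have "w \<in> Tleft_weak (axis 1 1)"
    using act_in_Tleft_weak_iff[OF g'] by blast
  then have "mink w (xi (\<i> * complex_of_real v)) \<noteq> 0"
    using v by (rule Tleft_weak_mink_xi_imaginary_neq_0)
  then show "mink z' (act g (xi (complex_of_real \<phi> + \<i> * complex_of_real v))) \<noteq> 0"
    using g' by (simp add: cycle w mink_act SO012_def)
qed

end
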